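(* Let $s\in(0,1)$, $N>2s$, $p\in(2,2_s^* )$, $a\in\mathbb{R}^{N-1}$ and $\rho>0$. With $a_r=(a,r)$ and $\Psi_y$, $\beta$ as in the context, there is $r_3>0$ such that if $r\ge r_3$ then $$\langle\beta(\Psi_y),y\rangle>0\quad\text{for all } y\in\partial B_{r/2}(a_r).$$
   Context: $2_s^*=\frac{2N}{N-2s}$. $H^s(\mathbb{R}^N)$ has norm $\|u\|_s^2=\int u^2+\iint_{\mathbb{R}^{2N}}\frac{|u(x)-u(z)|^2}{|x-z|^{N+2s}}dz\,dx$; $\varphi\in H^s(\mathbb{R}^N)$ is a minimizer of $M_\infty=\inf\{\|u\|_s^2:\int_{\mathbb{R}^N}|u|^p=1\}$ with $\int|\varphi|^p=1$. $\xi\in C^\infty([0,\infty))$, $0\le\xi\le1$, $\xi=0$ on $[0,\rho]$, $\xi=1$ on $[2\rho,\infty)$; $\eta\in C^\infty(\mathbb{R})$, $0\le\eta\le1$, $\eta=0$ on $(-\infty,0]$, $\eta=1$ on $[1,\infty)$. $f_y(x)=\xi(|x-a_r|)\eta(x_N)\varphi(x-y)$ and $\Psi_y=f_y/\|f_y\|_{L^p(\mathbb{R}^N)}$. $\chi(t)=1$ for $0\le t\le1$, $\chi(t)=1/t$ for $t\ge1$; $\beta(u)=\int_{\mathbb{R}^N}u^2(x)\chi(|x|)\,x\,dx\in\mathbb{R}^N$. *)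

theory Defs
  imports "HOL-Analysis.Analysis"
begin

definition crit_exp :: "real \<Rightarrow> nat \<Rightarrow> real" where
  "crit_exp s N = 2 * real N / (real N - 2 * s)"

definition gagliardo :: "real \<Rightarrow> ('a::euclidean_space \<Rightarrow> real) \<Rightarrow> ennreal" where
  "gagliardo s u = (\<integral>\<^sup>+ x. (\<integral>\<^sup>+ z. ennreal (\<bar>u x - u z\<bar>\<^sup>2 / norm (x - z) powr (real DIM('a) + 2 * s)) \<partial>lebesgue) \<partial>lebesgue)"

definition in_Hs :: "real \<Rightarrow> ('a::euclidean_space \<Rightarrow> real) \<Rightarrow> bool" where
  "in_Hs s u \<longleftrightarrow> u \<in> borel_measurable lebesgue
      \<and> (\<integral>\<^sup>+ x. ennreal ((u x)\<^sup>2) \<partial>lebesgue) < \<infinity> \<and> gagliardo s u < \<infinity>"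

definition Hs_norm2 :: "real \<Rightarrow> ('a::euclidean_space \<Rightarrow> real) \<Rightarrow> real" where
  "Hs_norm2 s u = enn2real (\<integral>\<^sup>+ x. ennreal ((u x)\<^sup>2) \<partial>lebesgue) + enn2real (gagliardo s u)"

definition Lp_int :: "real \<Rightarrow> ('a::euclidean_space \<Rightarrow> real) \<Rightarrow> ennreal" where
  "Lp_int p u = (\<integral>\<^sup>+ x. ennreal (\<bar>u x\<bar> powr p) \<partial>lebesgue)"

definition Lp_norm :: "real \<Rightarrow> ('a::euclidean_space \<Rightarrow> real) \<Rightarrow> real" where
  "Lp_norm p u = enn2real (Lp_int p u) powr (1 / p)"

definition is_minimizer :: "real \<Rightarrow> real \<Rightarrow> ('a::euclidean_space \<Rightarrow> real) \<Rightarrow> bool" where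
  "is_minimizer s p \<phi> \<longleftrightarrow> in_Hs s \<phi> \<and> Lp_int p \<phi> = 1
      \<and> (\<forall>u::'a \<Rightarrow> real. in_Hs s u \<and> Lp_int p u = 1 \<longrightarrow> Hs_norm2 s \<phi> \<le> Hs_norm2 s u)"

definition C_inf_on :: "real set \<Rightarrow> (real \<Rightarrow> real) \<Rightarrow> bool" where
  "C_inf_on S f \<longleftrightarrow> (\<forall>k. \<forall>x\<in>S. ((deriv ^^ k) f) differentiable (at x))"

definition chi :: "real \<Rightarrow> real" where
  "chi t = (if t \<le> 1 then 1 else 1 / t)"

definition beta :: "('a::euclidean_space \<Rightarrow> real) \<Rightarrow> 'a" where
  "beta u = (\<integral> x. ((u x)\<^sup>2 * chi (norm x)) *\<^sub>R x \<partial>lebesgue)"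

text \<open>f_y(x) = xi(|x - a_r|) eta(x_N) phi(x - y), where x_N = x \<bullet> e.\<close>
definition f_fun :: "(real \<Rightarrow> real) \<Rightarrow> (real \<Rightarrow> real) \<Rightarrow> ('a::euclidean_space \<Rightarrow> real)
    \<Rightarrow> 'a \<Rightarrow> 'a \<Rightarrow> 'a \<Rightarrow> 'a \<Rightarrow> real" where
  "f_fun \<xi> \<eta> \<phi> e ar y x = \<xi> (norm (x - ar)) * \<eta> (x \<bullet> e) * \<phi> (x - y)"

definition Psi :: "real \<Rightarrow> (real \<Rightarrow> real) \<Rightarrow> (real \<Rightarrow> real) \<Rightarrow> ('a::euclidean_space \<Rightarrow> real)
    \<Rightarrow> 'a \<Rightarrow> 'a \<Rightarrow> 'a \<Rightarrow> 'a \<Rightarrow> real" where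
  "Psi p \<xi> \<eta> \<phi> e ar y x = f_fun \<xi> \<eta> \<phi> e ar y x / Lp_norm p (f_fun \<xi> \<eta> \<phi> e ar y)"

end

theory Submission
  imports Defs
begin

(* Let A = int phi^2 > 0 and fix T such that the ball B_T(0) carries more than 2A/3 of this mass.
   For y on the sphere we have |y| >= r/2, and for large r both cut-offs equal 1 on B_T(y), so
   f_y = phi(. - y) there, while |f_y| <= |phi(. - y)| everywhere. The weight chi(|x|) <x, y> is at
   least |y|/2 on B_T(y) and at least -|y| everywhere (since t chi(t) <= 1), hence
   <beta(f_y), y> >= |y| (3/2 A_T - A) > 0 with A_T the mass of phi^2 in B_T(0). Normalising f_y
   only multiplies beta by 1/||f_y||_p^2, which is positive because beta(f_y) <> 0 forces f_y to be
   nonzero on a set of positive measure. *)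

lemma measurable_lebesgue_translate: "(\<lambda>x::'a::euclidean_space. x - y) \<in> lebesgue \<rightarrow>\<^sub>M lebesgue"
  using lebesgue_affine_measurable[of "\<lambda>_. 1" "-y"] by (simp add: euclidean_representation)

lemma distr_lebesgue_translate: "distr lebesgue lebesgue (\<lambda>x::'a::euclidean_space. x - y) = lebesgue"
proof -
  have "lebesgue = density (distr lebesgue lebesgue (\<lambda>x::'a. x - y)) (\<lambda>_. 1)"
    using lebesgue_affine_euclidean[of "\<lambda>_. 1" "-y"] by (simp add: euclidean_representation)
  then show ?thesis by (simp add: density_1)
qed

lemma borel_measurable_translate:
  "g \<in> borel_measurable lebesgue \<Longrightarrow> (\<lambda>x::'a::euclidean_space. g (x - y)) \<in> borel_measurable lebesgue"
  using measurable_compose[OF measurable_lebesgue_translate] by blast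

lemma integrable_translate:
  fixes g :: "'a::euclidean_space \<Rightarrow> real"
  assumes "integrable lebesgue g"
  shows "integrable lebesgue (\<lambda>x. g (x - y))"
  using assms integrable_distr_eq[OF measurable_lebesgue_translate, of g y]
  by (simp add: distr_lebesgue_translate borel_measurable_integrable)

lemma integral_translate:
  fixes g :: "'a::euclidean_space \<Rightarrow> real"
  assumes "g \<in> borel_measurable lebesgue"
  shows "(\<integral>x. g (x - y) \<partial>lebesgue) = integral\<^sup>L lebesgue g"
  using integral_distr[OF measurable_lebesgue_translate assms, of y] by (simp add: distr_lebesgue_translate)

lemma nn_integral_translate:
  fixes g :: "'a::euclidean_space \<Rightarrow> ennreal"
  assumes "g \<in> borel_measurable lebesgue"
  shows "(\<integral>\<^sup>+ x. g (x - y) \<partial>lebesgue) = integral\<^sup>N lebesgue g"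
  using nn_integral_distr[OF measurable_lebesgue_translate, of g y] assms
  by (simp add: distr_lebesgue_translate)

lemma tendsto_integral_cball_at_top:
  fixes w :: "'a::euclidean_space \<Rightarrow> real"
  assumes w: "integrable lebesgue w"
  shows "((\<lambda>T. \<integral>z. indicator (cball 0 T) z * w z \<partial>lebesgue) \<longlongrightarrow> integral\<^sup>L lebesgue w) at_top"
proof (rule integral_dominated_convergence_at_top[where w = "\<lambda>z. \<bar>w z\<bar>"])
  show "(\<lambda>z. indicator (cball 0 T) z * w z) \<in> borel_measurable lebesgue" for T
    by (rule borel_measurable_integrable)
      (use integrable_mult_indicator[OF fmeasurableD[OF lmeasurable_cball] w] in simp)
  show "AE z in lebesgue. ((\<lambda>T. indicator (cball 0 T) z * w z) \<longlongrightarrow> w z) at_top"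
  proof (rule AE_I2)
    fix z :: 'a
    have "\<forall>\<^sub>F T in at_top. indicator (cball 0 T) z * w z = w z"
      using eventually_ge_at_top[of "norm z"] by eventually_elim simp
    then show "((\<lambda>T. indicator (cball 0 T) z * w z) \<longlongrightarrow> w z) at_top"
      by (rule tendsto_eventually)
  qed
  show "\<forall>\<^sub>F T in at_top. AE z in lebesgue. norm (indicator (cball 0 T) z * w z) \<le> \<bar>w z\<bar>"
    by (simp add: indicator_def)
qed (use w in \<open>simp_all add: borel_measurable_integrable\<close>)

lemma C_inf_on_imp_continuous_on: "C_inf_on S f \<Longrightarrow> continuous_on S f"
  unfolding C_inf_on_def
  by (metis continuous_at_imp_continuous_on differentiable_imp_continuous_within funpow_0)

lemma chi_nonneg: "0 \<le> chi t"
  by (simp add: chi_def)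

lemma chi_mult_le_1: "0 \<le> t \<Longrightarrow> chi t * t \<le> 1"
  by (simp add: chi_def)

lemma chi_norm_inner_ge: "- norm y \<le> chi (norm x) * (x \<bullet> y)"
proof -
  have "chi (norm x) * \<bar>x \<bullet> y\<bar> \<le> (chi (norm x) * norm x) * norm y"
    using Cauchy_Schwarz_ineq2[of x y] chi_nonneg[of "norm x"]
    by (simp add: mult_left_mono mult.assoc)
  also have "\<dots> \<le> norm y"
    using chi_mult_le_1[of "norm x"] chi_nonneg[of "norm x"] by (simp add: mult_left_le_one_le)
  moreover have "chi (norm x) * (- \<bar>x \<bullet> y\<bar>) \<le> chi (norm x) * (x \<bullet> y)"
    using chi_nonneg[of "norm x"] by (intro mult_left_mono) auto
  ultimately show ?thesis
    by simp
qed

lemma chi_norm_inner_ge_near: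
  assumes near: "norm (x - y) \<le> T" and T: "0 \<le> T" "3 * T + 1 \<le> norm y"
  shows "norm y / 2 \<le> chi (norm x) * (x \<bullet> y)"
proof -
  define R where "R = norm y"
  have "R \<le> norm x + norm (x - y)"
    unfolding R_def by (metis norm_triangle_sub add.commute norm_minus_commute)
  then have x_ge_1: "1 \<le> norm x"
    using near T by (simp add: R_def)
  have x_le: "norm x \<le> R + T"
    using norm_triangle_ineq[of "x - y" y] near by (simp add: R_def)
  have "\<bar>(x - y) \<bullet> y\<bar> \<le> T * R"
    using Cauchy_Schwarz_ineq2[of "x - y" y] near
    by (simp add: R_def) (meson mult_right_mono norm_ge_zero order_trans)
  moreover have "x \<bullet> y = R\<^sup>2 + (x - y) \<bullet> y"
    by (simp add: R_def inner_diff_left power2_norm_eq_inner)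
  ultimately have "R\<^sup>2 - T * R \<le> x \<bullet> y"
    by linarith
  moreover have "R / 2 * (R + T) = R\<^sup>2 - T * R - R * (R - 3 * T) / 2"
    by (simp add: field_simps power2_eq_square)
  moreover have "0 \<le> R * (R - 3 * T) / 2"
    using T by (simp add: R_def)
  moreover have "R / 2 * norm x \<le> R / 2 * (R + T)"
    using x_le by (intro mult_left_mono) (auto simp: R_def)
  ultimately have "R / 2 * norm x \<le> x \<bullet> y"
    by linarith
  then have "R / 2 \<le> (x \<bullet> y) / norm x"
    using x_ge_1 by (subst pos_le_divide_eq) auto
  moreover have "chi (norm x) * (x \<bullet> y) = (x \<bullet> y) / norm x"
    using x_ge_1 by (auto simp: chi_def)
  ultimately show ?thesis
    by (simp add: R_def)
qed

lemma borel_measurable_lebesgue_id[measurable]: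
  "(\<lambda>x::'a::euclidean_space. x) \<in> borel_measurable lebesgue"
  by (rule measurable_completion) simp

lemma borel_measurable_lebesgue_chi_norm[measurable]:
  "(\<lambda>x::'a::euclidean_space. chi (norm x)) \<in> borel_measurable lebesgue"
  by (rule measurable_completion) (simp add: chi_def)

lemma integrable_beta_integrand:
  fixes g :: "'a::euclidean_space \<Rightarrow> real"
  assumes "g \<in> borel_measurable lebesgue" "integrable lebesgue (\<lambda>x. (g x)\<^sup>2)"
  shows "integrable lebesgue (\<lambda>x. ((g x)\<^sup>2 * chi (norm x)) *\<^sub>R x)"
proof (rule Bochner_Integration.integrable_bound[OF assms(2)])
  show "(\<lambda>x. ((g x)\<^sup>2 * chi (norm x)) *\<^sub>R x) \<in> borel_measurable lebesgue"
    using assms(1) by measurable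
  show "AE x in lebesgue. norm (((g x)\<^sup>2 * chi (norm x)) *\<^sub>R x) \<le> norm ((g x)\<^sup>2)"
  proof (rule AE_I2)
    fix x :: 'a
    have "norm (((g x)\<^sup>2 * chi (norm x)) *\<^sub>R x) = (g x)\<^sup>2 * (chi (norm x) * norm x)"
      using chi_nonneg[of "norm x"] by simp
    also have "\<dots> \<le> (g x)\<^sup>2"
      using chi_mult_le_1[of "norm x"] chi_nonneg[of "norm x"] by (simp add: mult_left_le)
    finally show "norm (((g x)\<^sup>2 * chi (norm x)) *\<^sub>R x) \<le> norm ((g x)\<^sup>2)"
      by simp
  qed
qed

lemma beta_inner:
  fixes g :: "'a::euclidean_space \<Rightarrow> real"
  assumes "g \<in> borel_measurable lebesgue" "integrable lebesgue (\<lambda>x. (g x)\<^sup>2)"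
  shows "beta g \<bullet> y = (\<integral>x. (g x)\<^sup>2 * chi (norm x) * (x \<bullet> y) \<partial>lebesgue)"
  using integral_inner_left[OF integrable_beta_integrand[OF assms], of y]
  by (simp add: beta_def mult.assoc)

lemma beta_divide: "beta (\<lambda>x. g x / c) = (1 / c\<^sup>2) *\<^sub>R beta g"
proof -
  have "((g x / c)\<^sup>2 * chi (norm x)) *\<^sub>R x = (1 / c\<^sup>2) *\<^sub>R (((g x)\<^sup>2 * chi (norm x)) *\<^sub>R x)" for x
    by (simp add: power_divide)
  then show ?thesis
    unfolding beta_def by (simp only: integral_scaleR_right)
qed

lemma beta_eq_0_if_AE_zero: "AE x in lebesgue. g x = 0 \<Longrightarrow> beta g = 0"
  unfolding beta_def by (rule integral_eq_zero_AE) auto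

lemma Lp_int_eq_0_iff:
  fixes f :: "'a::euclidean_space \<Rightarrow> real"
  assumes [measurable]: "f \<in> borel_measurable lebesgue" and "0 < p"
  shows "Lp_int p f = 0 \<longleftrightarrow> (AE x in lebesgue. f x = 0)"
proof -
  have "Lp_int p f = 0 \<longleftrightarrow> (AE x in lebesgue. ennreal (\<bar>f x\<bar> powr p) = 0)"
    unfolding Lp_int_def by (intro nn_integral_0_iff_AE) measurable
  also have "\<dots> \<longleftrightarrow> (AE x in lebesgue. f x = 0)"
    using assms(2) by (intro AE_cong) auto
  finally show ?thesis .
qed

lemma Lp_norm_pos:
  fixes f :: "'a::euclidean_space \<Rightarrow> real"
  assumes "f \<in> borel_measurable lebesgue" "0 < p" "Lp_int p f < \<infinity>"
    and "\<not> (AE x in lebesgue. f x = 0)"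
  shows "0 < Lp_norm p f"
proof -
  have "Lp_int p f \<noteq> 0"
    using assms Lp_int_eq_0_iff by blast
  then have "0 < enn2real (Lp_int p f)"
    using assms(3) by (simp add: enn2real_positive_iff zero_less_iff_neq_zero)
  then show ?thesis
    by (simp add: Lp_norm_def)
qed

lemma beta_normalized_inner_pos:
  fixes f :: "'a::euclidean_space \<Rightarrow> real"
  assumes "f \<in> borel_measurable lebesgue" "0 < p" "Lp_int p f < \<infinity>" and pos: "0 < beta f \<bullet> y"
  shows "0 < beta (\<lambda>x. f x / Lp_norm p f) \<bullet> y"
proof -
  have "\<not> (AE x in lebesgue. f x = 0)"
    using pos beta_eq_0_if_AE_zero[of f] by auto
  then have "0 < Lp_norm p f"
    using assms by (intro Lp_norm_pos)
  then show ?thesis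
    using pos by (simp add: beta_divide)
qed

lemma integral_power2_pos:
  fixes f :: "'a \<Rightarrow> real"
  assumes "integrable M (\<lambda>x. (f x)\<^sup>2)" "\<not> (AE x in M. f x = 0)"
  shows "0 < (\<integral>x. (f x)\<^sup>2 \<partial>M)"
proof -
  have "(\<integral>x. (f x)\<^sup>2 \<partial>M) \<noteq> 0"
    using assms integral_nonneg_eq_0_iff_AE[OF assms(1)] by simp
  moreover have "0 \<le> (\<integral>x. (f x)\<^sup>2 \<partial>M)"
    by simp
  ultimately show ?thesis
    by linarith
qed

lemma exists_cball_integral_gt:
  fixes w :: "'a::euclidean_space \<Rightarrow> real"
  assumes "integrable lebesgue w" "c < integral\<^sup>L lebesgue w"
  shows "\<exists>T\<ge>0. c < (\<integral>z. indicator (cball 0 T) z * w z \<partial>lebesgue)"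
proof -
  have "\<forall>\<^sub>F T in at_top. 0 \<le> T \<and> c < (\<integral>z. indicator (cball 0 T) z * w z \<partial>lebesgue)"
    using order_tendstoD(1)[OF tendsto_integral_cball_at_top[OF assms(1)] assms(2)]
    by (intro eventually_conj eventually_ge_at_top)
  then show ?thesis
    unfolding eventually_at_top_linorder by blast
qed

lemma Lp_int_le_translate:
  fixes f \<phi> :: "'a::euclidean_space \<Rightarrow> real"
  assumes [measurable]: "\<phi> \<in> borel_measurable lebesgue" and "0 \<le> p"
    and le: "\<And>x. \<bar>f x\<bar> \<le> \<bar>\<phi> (x - y)\<bar>"
  shows "Lp_int p f \<le> Lp_int p \<phi>"
proof -
  have "Lp_int p f \<le> (\<integral>\<^sup>+ x. ennreal (\<bar>\<phi> (x - y)\<bar> powr p) \<partial>lebesgue)"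
    unfolding Lp_int_def using le \<open>0 \<le> p\<close> by (intro nn_integral_mono ennreal_leI powr_mono2) auto
  also have "\<dots> = Lp_int p \<phi>"
    unfolding Lp_int_def by (rule nn_integral_translate) measurable
  finally show ?thesis .
qed

lemma beta_integrand_ge:
  fixes x y :: "'a::euclidean_space"
  assumes u: "0 \<le> u" "u \<le> v" and near_eq: "norm (x - y) \<le> T \<Longrightarrow> u = v"
    and T: "0 \<le> T" "3 * T + 1 \<le> norm y"
  shows "norm y * (3 / 2 * (indicator (cball 0 T) (x - y) * v) - v) \<le> u * chi (norm x) * (x \<bullet> y)"
proof (cases "norm (x - y) \<le> T")
  case True
  then have "norm y * (3 / 2 * (indicator (cball 0 T) (x - y) * v) - v) = u * (norm y / 2)"
    using near_eq by simp
  also have "\<dots> \<le> u * (chi (norm x) * (x \<bullet> y))"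
    using chi_norm_inner_ge_near[OF True T] u(1) by (rule mult_left_mono)
  finally show ?thesis
    by (simp add: mult.assoc)
next
  case False
  then have "norm y * (3 / 2 * (indicator (cball 0 T) (x - y) * v) - v) = v * (- norm y)"
    by simp
  also have "\<dots> \<le> u * (- norm y)"
    using mult_right_mono[OF u(2) norm_ge_zero[of y]] by simp
  also have "\<dots> \<le> u * (chi (norm x) * (x \<bullet> y))"
    using chi_norm_inner_ge[of y x] u(1) by (rule mult_left_mono)
  finally show ?thesis
    by (simp add: mult.assoc)
qed

lemma beta_inner_pos_if_concentrated:
  fixes g w :: "'a::euclidean_space \<Rightarrow> real"
  assumes w: "integrable lebesgue w"
    and mass: "2 / 3 * integral\<^sup>L lebesgue w < (\<integral>z. indicator (cball 0 T) z * w z \<partial>lebesgue)"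
    and g: "g \<in> borel_measurable lebesgue" "\<And>x. (g x)\<^sup>2 \<le> w (x - y)"
      "\<And>x. norm (x - y) \<le> T \<Longrightarrow> (g x)\<^sup>2 = w (x - y)"
    and T: "0 \<le> T" "3 * T + 1 \<le> norm y"
  shows "0 < beta g \<bullet> y"
proof -
  define wT where "wT z = indicator (cball 0 T) z * w z" for z
  define L where "L x = norm y * (3 / 2 * wT (x - y) - w (x - y))" for x
  have wT_int: "integrable lebesgue wT"
    unfolding wT_def using integrable_mult_indicator[OF fmeasurableD[OF lmeasurable_cball] w] by simp
  have L_int: "integrable lebesgue L"
    unfolding L_def using integrable_translate[OF w, of y] integrable_translate[OF wT_int, of y] by simp
  have g2_int: "integrable lebesgue (\<lambda>x. (g x)\<^sup>2)"
  proof (rule Bochner_Integration.integrable_bound[OF integrable_translate[OF w, of y]])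
    show "(\<lambda>x. (g x)\<^sup>2) \<in> borel_measurable lebesgue"
      using g(1) by measurable
  qed (use g(2) in \<open>auto intro: order_trans[OF _ abs_ge_self]\<close>)
  have "0 < norm y"
    using T by linarith
  then have "0 < norm y * (3 / 2 * integral\<^sup>L lebesgue wT - integral\<^sup>L lebesgue w)"
    using mass by (intro mult_pos_pos) (simp_all add: wT_def[abs_def])
  also have "\<dots> = integral\<^sup>L lebesgue L"
    unfolding L_def
    using integrable_translate[OF w, of y] integrable_translate[OF wT_int, of y]
      integral_translate[OF borel_measurable_integrable[OF w]]
      integral_translate[OF borel_measurable_integrable[OF wT_int]]
    by simp
  also have "\<dots> \<le> (\<integral>x. (g x)\<^sup>2 * chi (norm x) * (x \<bullet> y) \<partial>lebesgue)"
  proof (rule integral_mono[OF L_int])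
    show "integrable lebesgue (\<lambda>x. (g x)\<^sup>2 * chi (norm x) * (x \<bullet> y))"
      using integrable_inner_left[OF integrable_beta_integrand[OF g(1) g2_int], of y]
      by (simp add: mult.assoc)
    show "L x \<le> (g x)\<^sup>2 * chi (norm x) * (x \<bullet> y)" for x
      unfolding L_def wT_def using g(2,3) T by (intro beta_integrand_ge) auto
  qed
  also have "\<dots> = beta g \<bullet> y"
    using beta_inner[OF g(1) g2_int] by simp
  finally show ?thesis .
qed

lemma mem_sphere_inner_ge:
  fixes a e y :: "'a::euclidean_space"
  assumes e: "norm e = 1" and a: "a \<bullet> e = 0" and y: "y \<in> sphere (a + r *\<^sub>R e) (r / 2)"
  shows "r / 2 \<le> y \<bullet> e"
proof -
  have "\<bar>(y - (a + r *\<^sub>R e)) \<bullet> e\<bar> \<le> r / 2"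
    using Cauchy_Schwarz_ineq2[of "y - (a + r *\<^sub>R e)" e] y e
    by (simp add: dist_norm norm_minus_commute)
  then have "- ((y - (a + r *\<^sub>R e)) \<bullet> e) \<le> r / 2"
    by linarith
  then show ?thesis
    using a e by (simp add: inner_diff_left inner_add_left power2_norm_eq_inner[symmetric])
qed

lemma f_fun_sq_le:
  assumes "\<forall>t\<ge>0. 0 \<le> \<xi> t \<and> \<xi> t \<le> 1" "\<forall>t. 0 \<le> \<eta> t \<and> \<eta> t \<le> 1"
  shows "(f_fun \<xi> \<eta> \<phi> e c y x)\<^sup>2 \<le> (\<phi> (x - y))\<^sup>2"
proof -
  have "(\<xi> (norm (x - c)) * \<eta> (x \<bullet> e))\<^sup>2 \<le> 1"
    using assms by (simp add: abs_square_le_1 abs_mult mult_le_one)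
  then show ?thesis
    unfolding f_fun_def power_mult_distrib by (simp add: mult_left_le_one_le)
qed

lemma f_fun_eq_translate_near:
  fixes a e y :: "'a::euclidean_space"
  assumes e: "norm e = 1" and a: "a \<bullet> e = 0" and y: "y \<in> sphere (a + r *\<^sub>R e) (r / 2)"
    and \<xi>: "\<forall>t\<ge>2*\<rho>. \<xi> t = 1" and \<eta>: "\<forall>t\<ge>1. \<eta> t = 1"
    and near: "norm (x - y) \<le> T" and r: "2 * (T + 2 * \<rho> + 1) \<le> r" and "0 \<le> \<rho>"
  shows "f_fun \<xi> \<eta> \<phi> e (a + r *\<^sub>R e) y x = \<phi> (x - y)"
proof -
  have "(y - x) \<bullet> e \<le> T"
    using Cauchy_Schwarz_ineq2[of "y - x" e] near e by (simp add: norm_minus_commute)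
  then have "1 \<le> x \<bullet> e"
    using mem_sphere_inner_ge[OF e a y] r \<open>0 \<le> \<rho>\<close> by (simp add: inner_diff_left)
  moreover have "r / 2 \<le> dist x (a + r *\<^sub>R e) + dist x y"
    using y dist_triangle[of y "a + r *\<^sub>R e" x] by (simp add: dist_commute)
  then have "2 * \<rho> \<le> norm (x - (a + r *\<^sub>R e))"
    using near r by (simp add: dist_norm)
  ultimately show ?thesis
    using \<xi> \<eta> by (simp add: f_fun_def)
qed

lemma f_fun_measurable:
  assumes \<phi>: "\<phi> \<in> borel_measurable lebesgue"
    and \<xi>: "continuous_on {0<..} \<xi>" "\<xi> 0 = 0" and \<eta>: "continuous_on UNIV \<eta>"
  shows "f_fun \<xi> \<eta> \<phi> e c y \<in> borel_measurable lebesgue"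
proof -
  have "(\<lambda>t. indicator {0<..} t *\<^sub>R \<xi> t) \<in> borel_measurable borel"
    using \<xi>(1) by (intro borel_measurable_continuous_on_indicator) simp_all
  then have "(\<lambda>x. indicator {0<..} (norm (x - c)) *\<^sub>R \<xi> (norm (x - c))) \<in> borel_measurable borel"
    by (rule measurable_compose[rotated]) simp
  moreover have "(\<lambda>x. indicator {0<..} (norm (x - c)) *\<^sub>R \<xi> (norm (x - c))) = (\<lambda>x. \<xi> (norm (x - c)))"
    using \<xi>(2) by (intro ext) (auto simp: indicator_def)
  ultimately have [measurable]: "(\<lambda>x. \<xi> (norm (x - c))) \<in> borel_measurable lebesgue"
    by (intro measurable_completion) simp
  have [measurable]: "(\<lambda>x. \<eta> (x \<bullet> e)) \<in> borel_measurable lebesgue"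
    by (intro measurable_completion borel_measurable_continuous_on[OF \<eta>]) simp
  have [measurable]: "(\<lambda>x. \<phi> (x - y)) \<in> borel_measurable lebesgue"
    by (rule borel_measurable_translate[OF \<phi>])
  show ?thesis
    unfolding f_fun_def[abs_def] by measurable
qed

lemma beta_f_fun_inner_pos:
  fixes a e y :: "'a::euclidean_space"
  assumes e: "norm e = 1" and a: "a \<bullet> e = 0"
    and \<phi>: "\<phi> \<in> borel_measurable lebesgue" "integrable lebesgue (\<lambda>x. (\<phi> x)\<^sup>2)"
    and \<xi>: "continuous_on {0<..} \<xi>" "\<forall>t\<ge>0. 0 \<le> \<xi> t \<and> \<xi> t \<le> 1" "\<xi> 0 = 0" "\<forall>t\<ge>2*\<rho>. \<xi> t = 1"
    and \<eta>: "continuous_on UNIV \<eta>" "\<forall>t. 0 \<le> \<eta> t \<and> \<eta> t \<le> 1" "\<forall>t\<ge>1. \<eta> t = 1"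
    and mass: "2 / 3 * (\<integral>z. (\<phi> z)\<^sup>2 \<partial>lebesgue) < (\<integral>z. indicator (cball 0 T) z * (\<phi> z)\<^sup>2 \<partial>lebesgue)"
    and "0 \<le> T" "0 \<le> \<rho>" and r: "2 * (3 * T + 2 * \<rho> + 1) \<le> r"
    and y: "y \<in> sphere (a + r *\<^sub>R e) (r / 2)"
  shows "0 < beta (f_fun \<xi> \<eta> \<phi> e (a + r *\<^sub>R e) y) \<bullet> y"
proof (rule beta_inner_pos_if_concentrated[OF \<phi>(2) mass])
  show "f_fun \<xi> \<eta> \<phi> e (a + r *\<^sub>R e) y \<in> borel_measurable lebesgue"
    using \<phi>(1) \<xi>(1,3) \<eta>(1) by (rule f_fun_measurable)
  show "(f_fun \<xi> \<eta> \<phi> e (a + r *\<^sub>R e) y x)\<^sup>2 \<le> (\<phi> (x - y))\<^sup>2" for x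
    using \<xi>(2) \<eta>(2) by (rule f_fun_sq_le)
  show "(f_fun \<xi> \<eta> \<phi> e (a + r *\<^sub>R e) y x)\<^sup>2 = (\<phi> (x - y))\<^sup>2" if "norm (x - y) \<le> T" for x
    using f_fun_eq_translate_near[OF e a y \<xi>(4) \<eta>(3) that _ \<open>0 \<le> \<rho>\<close>] r \<open>0 \<le> T\<close> by simp
  show "3 * T + 1 \<le> norm y"
    using mem_sphere_inner_ge[OF e a y] Cauchy_Schwarz_ineq2[of y e] e r \<open>0 \<le> \<rho>\<close> by simp
qed (simp_all add: \<open>0 \<le> T\<close>)

theorem mainTheorem5:
  fixes s p \<rho> :: real
    and e a :: "'a::euclidean_space"
    and \<phi> :: "'a \<Rightarrow> real"
    and \<xi> \<eta> :: "real \<Rightarrow> real"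
  assumes s: "0 < s" "s < 1"
    and N: "real DIM('a) > 2 * s"
    and p: "2 < p" "p < crit_exp s DIM('a)"
    and e: "e \<in> Basis"
    and a: "a \<bullet> e = 0"
    and rho: "\<rho> > 0"
    and phi: "is_minimizer s p \<phi>"
    and xi: "C_inf_on {0<..} \<xi>" "\<forall>t\<ge>0. 0 \<le> \<xi> t \<and> \<xi> t \<le> 1"
        "\<forall>t\<in>{0..\<rho>}. \<xi> t = 0" "\<forall>t\<ge>2*\<rho>. \<xi> t = 1"
    and eta: "C_inf_on UNIV \<eta>" "\<forall>t. 0 \<le> \<eta> t \<and> \<eta> t \<le> 1"
        "\<forall>t\<le>0. \<eta> t = 0" "\<forall>t\<ge>1. \<eta> t = 1"
  shows "\<exists>r3>0. \<forall>r\<ge>r3. \<forall>y\<in>sphere (a + r *\<^sub>R e) (r / 2).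
           beta (Psi p \<xi> \<eta> \<phi> e (a + r *\<^sub>R e) y) \<bullet> y > 0"
proof -
  have \<phi>: "\<phi> \<in> borel_measurable lebesgue" "integrable lebesgue (\<lambda>x. (\<phi> x)\<^sup>2)" "Lp_int p \<phi> = 1"
    using phi unfolding is_minimizer_def in_Hs_def by (auto intro: integrableI_bounded)
  have p_pos: "0 < p"
    using p(1) by simp
  have \<xi>: "continuous_on {0<..} \<xi>" "\<xi> 0 = 0" and \<eta>: "continuous_on UNIV \<eta>"
    using C_inf_on_imp_continuous_on xi(1,3) eta(1) rho by auto
  have "\<not> (AE x in lebesgue. \<phi> x = 0)"
    using Lp_int_eq_0_iff[OF \<phi>(1) p_pos] \<phi>(3) by simp
  then have "2 / 3 * (\<integral>z. (\<phi> z)\<^sup>2 \<partial>lebesgue) < (\<integral>z. (\<phi> z)\<^sup>2 \<partial>lebesgue)"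
    using integral_power2_pos[OF \<phi>(2)] by simp
  then obtain T where T: "0 \<le> T"
    "2 / 3 * (\<integral>z. (\<phi> z)\<^sup>2 \<partial>lebesgue) < (\<integral>z. indicator (cball 0 T) z * (\<phi> z)\<^sup>2 \<partial>lebesgue)"
    using exists_cball_integral_gt[OF \<phi>(2)] by blast
  show ?thesis
  proof (intro exI[of _ "2 * (3 * T + 2 * \<rho> + 1)"] conjI allI impI ballI)
    show "0 < 2 * (3 * T + 2 * \<rho> + 1)"
      using T rho by simp
    fix r y
    assume r: "2 * (3 * T + 2 * \<rho> + 1) \<le> r" and y: "y \<in> sphere (a + r *\<^sub>R e) (r / 2)"
    define f where "f = f_fun \<xi> \<eta> \<phi> e (a + r *\<^sub>R e) y"
    have "f \<in> borel_measurable lebesgue"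
      unfolding f_def by (rule f_fun_measurable[OF \<phi>(1) \<xi> \<eta>])
    moreover have "Lp_int p f \<le> Lp_int p \<phi>"
      unfolding f_def using p_pos f_fun_sq_le[OF xi(2) eta(2)]
      by (intro Lp_int_le_translate[OF \<phi>(1)]) (auto simp: abs_le_square_iff)
    then have "Lp_int p f < \<infinity>"
      using \<phi>(3) order_le_less_trans by fastforce
    moreover have "0 < beta f \<bullet> y"
      unfolding f_def using e rho
      by (intro beta_f_fun_inner_pos[OF _ a \<phi>(1,2) \<xi>(1) xi(2) \<xi>(2) xi(4) \<eta> eta(2,4) T(2,1) _ r y]) auto
    ultimately have "0 < beta (\<lambda>x. f x / Lp_norm p f) \<bullet> y"
      using p_pos by (intro beta_normalized_inner_pos)
    then show "0 < beta (Psi p \<xi> \<eta> \<phi> e (a + r *\<^sub>R e) y) \<bullet> y"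
      unfolding f_def Psi_def[abs_def] .
  qed
qed

end
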